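(* Let $k\ge1$, $G=(V,E)$ an inductively $k$-independent graph with $k$-independence ordering $v_1,\dots,v_n$, $f:2^V\to\mathbb{R}_{\ge0}$ monotone submodular with $f(\emptyset)=0$, and $\beta>0$. The algorithm PREEMPTIVE-GREEDY (described in the context) with parameter $\beta$ returns an independent set $S_{\mathrm{out}}$ of $G$ such that for every independent set $T$ of $G$, \[ f(T)\le\big(k(1+\beta)+1\big)\big(1+\beta^{-1}\big)\,f(S_{\mathrm{out}}). \]
   Context: $N(v)$ is the neighbourhood of $v$ (excluding $v$); $G$ is inductively $k$-independent with $k$-independence ordering $v_1,\dots,v_n$ if for every $i$, $G[N(v_i)\cap\{v_i,\dots,v_n\}]$ has no independent set of size more than $k$. Order $V$ by $v_1<v_2<\dots<v_n$. For $S\subseteq V$ and $v\in V$, $f_S(v)=f(S\cup\{v\})-f(S)$, and the incremental value of $u$ in $S$ is $\nu_f(S,u)=f_{S'}(u)$ where $S'=\{s\in S:s<u\}$. Algorithm PREEMPTIVE-GREEDY (parameter $\beta>0$): start with $S=\emptyset$; for $i=1,\dots,n$: let $C_i=N(v_i)\cap S$; if $f_S(v_i)\ge(1+\beta)\sum_{u\in C_i}\nu_f(S,u)$, replace $S$ by $(S\setminus C_i)\cup\{v_i\}$. Return the final $S$ as $S_{\mathrm{out}}$. *)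

theory Defs
  imports Complex_Main
begin

definition simple_graph :: "'a set \<Rightarrow> ('a \<Rightarrow> 'a \<Rightarrow> bool) \<Rightarrow> bool" where
  "simple_graph V E \<longleftrightarrow> finite V \<and> (\<forall>u v. E u v \<longrightarrow> u \<in> V \<and> v \<in> V) \<and>
     (\<forall>u v. E u v \<longrightarrow> E v u) \<and> (\<forall>v. \<not> E v v)"

definition nbr :: "('a \<Rightarrow> 'a \<Rightarrow> bool) \<Rightarrow> 'a \<Rightarrow> 'a set" where
  "nbr E v = {u. E v u \<and> u \<noteq> v}"

definition independent :: "('a \<Rightarrow> 'a \<Rightarrow> bool) \<Rightarrow> 'a set \<Rightarrow> bool" where
  "independent E A \<longleftrightarrow> (\<forall>x\<in>A. \<forall>y\<in>A. \<not> E x y)"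

definition independent_set :: "'a set \<Rightarrow> ('a \<Rightarrow> 'a \<Rightarrow> bool) \<Rightarrow> 'a set \<Rightarrow> bool" where
  "independent_set V E A \<longleftrightarrow> A \<subseteq> V \<and> independent E A"

definition k_independence_ordering ::
  "nat \<Rightarrow> 'a set \<Rightarrow> ('a \<Rightarrow> 'a \<Rightarrow> bool) \<Rightarrow> 'a list \<Rightarrow> bool" where
  "k_independence_ordering k V E vs \<longleftrightarrow> distinct vs \<and> set vs = V \<and>
     (\<forall>i < length vs. \<forall>I. I \<subseteq> nbr E (vs ! i) \<inter> set (drop i vs) \<and> independent E I
         \<longrightarrow> card I \<le> k)"

definition inductively_k_independent :: "nat \<Rightarrow> 'a set \<Rightarrow> ('a \<Rightarrow> 'a \<Rightarrow> bool) \<Rightarrow> bool" where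
  "inductively_k_independent k V E \<longleftrightarrow> (\<exists>vs. k_independence_ordering k V E vs)"

definition monotone_submodular :: "'a set \<Rightarrow> ('a set \<Rightarrow> real) \<Rightarrow> bool" where
  "monotone_submodular V f \<longleftrightarrow>
     (\<forall>A. A \<subseteq> V \<longrightarrow> f A \<ge> 0) \<and>
     (\<forall>A B. A \<subseteq> B \<and> B \<subseteq> V \<longrightarrow> f A \<le> f B) \<and>
     (\<forall>A B. A \<subseteq> V \<and> B \<subseteq> V \<longrightarrow> f (A \<union> B) + f (A \<inter> B) \<le> f A + f B)"

definition marginal :: "('a set \<Rightarrow> real) \<Rightarrow> 'a set \<Rightarrow> 'a \<Rightarrow> real" where
  "marginal f S v = f (S \<union> {v}) - f S"

definition before :: "'a list \<Rightarrow> 'a \<Rightarrow> 'a \<Rightarrow> bool" where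
  "before vs s u \<longleftrightarrow> (\<exists>i j. i < j \<and> j < length vs \<and> vs ! i = s \<and> vs ! j = u)"

definition incr_value :: "'a list \<Rightarrow> ('a set \<Rightarrow> real) \<Rightarrow> 'a set \<Rightarrow> 'a \<Rightarrow> real" where
  "incr_value vs f S u = marginal f {s \<in> S. before vs s u} u"

definition pg_step :: "'a list \<Rightarrow> ('a \<Rightarrow> 'a \<Rightarrow> bool) \<Rightarrow> ('a set \<Rightarrow> real) \<Rightarrow> real
    \<Rightarrow> 'a set \<Rightarrow> 'a \<Rightarrow> 'a set" where
  "pg_step vs E f \<beta> S v =
     (let C = nbr E v \<inter> S in
      if marginal f S v \<ge> (1 + \<beta>) * (\<Sum>u\<in>C. incr_value vs f S u)
      then (S - C) \<union> {v} else S)"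

definition preemptive_greedy :: "'a list \<Rightarrow> ('a \<Rightarrow> 'a \<Rightarrow> bool) \<Rightarrow> ('a set \<Rightarrow> real) \<Rightarrow> real \<Rightarrow> 'a set" where
  "preemptive_greedy vs E f \<beta> = foldl (pg_step vs E f \<beta>) {} vs"

end

theory Submission
  imports Defs
begin

(* Let S_t be the solution after t steps and A the set of vertices that are ever in it.
  Charge every u \<in> A with its incremental value at the last step at which u is in the
  solution. Evicting a set C raises f by at least \<beta> times the charge of C, so the charge
  of A - S_out is at most f(S_out)/\<beta>, and that of S_out is at most f(S_out).
  A vertex x of an independent set T that is never chosen was rejected on arrival, so by
  submodularity its marginal value over A is at most (1 + \<beta>) times the charge of its
  neighbours in the solution at that time. These neighbours precede x, so by
  k-independence each u \<in> A is charged by at most k such vertices x. As f(A) is at most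
  the charge of A, this gives
  f(T) \<le> f(A) + (1 + \<beta>) k charge(A) \<le> (k(1 + \<beta>) + 1)(1 + 1/\<beta>) f(S_out). *)

lemma monotone_submodular_mono:
  "monotone_submodular V f \<Longrightarrow> A \<subseteq> B \<Longrightarrow> B \<subseteq> V \<Longrightarrow> f A \<le> f B"
  by (auto simp: monotone_submodular_def)

lemma monotone_submodular_union_inter:
  "monotone_submodular V f \<Longrightarrow> A \<subseteq> V \<Longrightarrow> B \<subseteq> V
    \<Longrightarrow> f (A \<union> B) + f (A \<inter> B) \<le> f A + f B"
  by (auto simp: monotone_submodular_def)

lemma marginal_nonneg:
  "monotone_submodular V f \<Longrightarrow> X \<union> {v} \<subseteq> V \<Longrightarrow> 0 \<le> marginal f X v"
  unfolding marginal_def using monotone_submodular_mono[of V f X "X \<union> {v}"] by auto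

lemma marginal_antimono:
  assumes f: "monotone_submodular V f" and "X \<subseteq> Y" "Y \<union> {v} \<subseteq> V"
  shows "marginal f Y v \<le> marginal f X v"
proof -
  have sub: "X \<union> {v} \<subseteq> V" "Y \<subseteq> V" and union: "(X \<union> {v}) \<union> Y = Y \<union> {v}"
    using assms by auto
  have "f (Y \<union> {v}) + f ((X \<union> {v}) \<inter> Y) \<le> f (X \<union> {v}) + f Y"
    using monotone_submodular_union_inter[OF f sub] unfolding union .
  moreover have "f X \<le> f ((X \<union> {v}) \<inter> Y)"
    using assms by (intro monotone_submodular_mono[OF f]) auto
  ultimately show ?thesis unfolding marginal_def by linarith
qed

lemma le_sum_marginal:
  assumes f: "monotone_submodular V f" and "finite B" "A \<union> B \<subseteq> V"
  shows "f (A \<union> B) \<le> f A + (\<Sum>b\<in>B. marginal f A b)"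
  using assms(2,3)
proof (induction B rule: finite_induct)
  case (insert b B)
  have "f (A \<union> insert b B) = f (A \<union> B) + marginal f (A \<union> B) b"
    unfolding marginal_def by (simp add: insert_commute)
  also have "marginal f (A \<union> B) b \<le> marginal f A b"
    using insert.prems by (intro marginal_antimono[OF f]) auto
  finally show ?case using insert by auto
qed simp

lemma before_nth_conv_take:
  assumes "distinct vs" "i < length vs"
  shows "before vs s (vs ! i) \<longleftrightarrow> s \<in> set (take i vs)"
proof
  assume "before vs s (vs ! i)"
  then obtain p j where "p < j" "j < length vs" "vs ! p = s" "vs ! j = vs ! i"
    unfolding before_def by blast
  moreover from this have "j = i" using assms by (simp add: nth_eq_iff_index_eq)
  ultimately show "s \<in> set (take i vs)" by (auto simp: in_set_conv_nth)
next
  assume "s \<in> set (take i vs)"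
  then obtain p where "p < i" "vs ! p = s" using assms(2) by (auto simp: in_set_conv_nth)
  then show "before vs s (vs ! i)" unfolding before_def using assms(2) by blast
qed

lemma before_in_set: "before vs s u \<Longrightarrow> s \<in> set vs \<and> u \<in> set vs"
  unfolding before_def by auto

lemma sum_incr_value:
  assumes "distinct vs" "X \<subseteq> set vs" "f {} = 0"
  shows "(\<Sum>u\<in>X. incr_value vs f X u) = f X"
proof -
  have prefix: "(\<Sum>u\<in>X \<inter> set (take i vs). incr_value vs f X u) = f (X \<inter> set (take i vs))"
    if "i \<le> length vs" for i
    using that
  proof (induction i)
    case (Suc i)
    let ?P = "X \<inter> set (take i vs)"
    have i: "i < length vs" using Suc by simp
    have take_Suc: "set (take (Suc i) vs) = insert (vs ! i) (set (take i vs))"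
      using i by (simp add: take_Suc_conv_app_nth)
    show ?case
    proof (cases "vs ! i \<in> X")
      case True
      have new: "vs ! i \<notin> ?P"
        using assms(1) i by (auto simp: in_set_conv_nth nth_eq_iff_index_eq)
      have preds: "{s \<in> X. before vs s (vs ! i)} = ?P"
        using before_nth_conv_take[OF assms(1) i] by auto
      have "X \<inter> set (take (Suc i) vs) = insert (vs ! i) ?P" using True take_Suc by auto
      then show ?thesis
        using Suc new by (simp add: incr_value_def preds marginal_def)
    next
      case False
      then show ?thesis using Suc take_Suc by simp
    qed
  qed (simp add: assms(3))
  show ?thesis using prefix[of "length vs"] assms(2) by (simp add: Int_absorb2)
qed

lemma incr_value_antimono:
  "monotone_submodular V f \<Longrightarrow> X \<subseteq> Y \<Longrightarrow> Y \<subseteq> V \<Longrightarrow> u \<in> V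
    \<Longrightarrow> incr_value vs f Y u \<le> incr_value vs f X u"
  unfolding incr_value_def by (rule marginal_antimono) auto

lemma diff_le_sum_incr_value:
  assumes f: "monotone_submodular V f" "f {} = 0" and vs: "distinct vs" "set vs = V"
    and "C \<subseteq> X" "X \<subseteq> V"
  shows "f X - f (X - C) \<le> (\<Sum>u\<in>C. incr_value vs f X u)"
proof -
  have "finite X" using assms finite_subset by blast
  have "(\<Sum>u\<in>X - C. incr_value vs f X u) \<le> (\<Sum>u\<in>X - C. incr_value vs f (X - C) u)"
    using assms by (intro sum_mono incr_value_antimono[OF f(1)]) auto
  also have "\<dots> = f (X - C)" using assms by (intro sum_incr_value) auto
  finally have "(\<Sum>u\<in>X - C. incr_value vs f X u) \<le> f (X - C)" .
  moreover have "f X = (\<Sum>u\<in>X - C. incr_value vs f X u) + (\<Sum>u\<in>C. incr_value vs f X u)"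
    using sum_incr_value[of vs X f] assms
      sum.subset_diff[OF \<open>C \<subseteq> X\<close> \<open>finite X\<close>, where g = "incr_value vs f X"]
    by simp
  ultimately show ?thesis by linarith
qed

lemma sum_sum_le_card_bound:
  fixes w :: "'b \<Rightarrow> real"
  assumes "finite T" "finite A" "\<And>u. u \<in> A \<Longrightarrow> 0 \<le> w u"
    and "\<And>u. u \<in> A \<Longrightarrow> card {x \<in> T. R x u} \<le> k"
  shows "(\<Sum>x\<in>T. \<Sum>u\<in>{u \<in> A. R x u}. w u) \<le> real k * (\<Sum>u\<in>A. w u)"
proof -
  have "(\<Sum>x\<in>T. \<Sum>u\<in>{u \<in> A. R x u}. w u) = (\<Sum>u\<in>A. \<Sum>x\<in>{x \<in> T. R x u}. w u)"
    by (rule sum.swap_restrict[OF assms(1,2)])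
  also have "\<dots> = (\<Sum>u\<in>A. real (card {x \<in> T. R x u}) * w u)" by simp
  also have "\<dots> \<le> (\<Sum>u\<in>A. real k * w u)"
    using assms(3,4) by (intro sum_mono mult_right_mono) auto
  finally show ?thesis by (simp add: sum_distrib_left)
qed

lemma pg_step_subset: "pg_step vs E f \<beta> S v \<subseteq> insert v S"
  by (auto simp: pg_step_def Let_def)

lemma foldl_pg_step_subset: "foldl (pg_step vs E f \<beta>) S xs \<subseteq> S \<union> set xs"
proof (induction xs arbitrary: S)
  case (Cons x xs)
  then show ?case using pg_step_subset[of vs E f \<beta> S x] by fastforce
qed simp

lemma independent_pg_step:
  assumes "independent E S" "\<And>a b. E a b \<Longrightarrow> E b a" "\<And>a. \<not> E a a"
  shows "independent E (pg_step vs E f \<beta> S v)"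
proof -
  have "independent E ((S - nbr E v \<inter> S) \<union> {v})"
    using assms unfolding independent_def nbr_def by blast
  then show ?thesis using assms(1) by (simp add: pg_step_def Let_def)
qed

lemma independent_foldl_pg_step:
  assumes "independent E S" "\<And>a b. E a b \<Longrightarrow> E b a" "\<And>a. \<not> E a a"
  shows "independent E (foldl (pg_step vs E f \<beta>) S xs)"
  using assms(1) by (induction xs arbitrary: S) (simp_all add: independent_pg_step assms(2,3))

lemma independent_set_preemptive_greedy:
  assumes "simple_graph V E" "set vs = V"
  shows "independent_set V E (preemptive_greedy vs E f \<beta>)"
proof -
  have "preemptive_greedy vs E f \<beta> \<subseteq> V"
    using foldl_pg_step_subset[of vs E f \<beta> "{}" vs] assms(2) by (simp add: preemptive_greedy_def)
  moreover have "independent E (preemptive_greedy vs E f \<beta>)"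
    unfolding preemptive_greedy_def using assms(1)
    by (intro independent_foldl_pg_step) (auto simp: simple_graph_def independent_def)
  ultimately show ?thesis by (simp add: independent_set_def)
qed

locale preemptive_greedy_analysis =
  fixes V :: "'a set" and E :: "'a \<Rightarrow> 'a \<Rightarrow> bool" and vs :: "'a list"
    and f :: "'a set \<Rightarrow> real" and \<beta> :: real
  assumes graph: "simple_graph V E"
    and distinct_vs: "distinct vs" and set_vs: "set vs = V"
    and submodular: "monotone_submodular V f" and f_empty: "f {} = 0"
    and \<beta>_pos: "\<beta> > 0"
begin

abbreviation n :: nat where "n \<equiv> length vs"

definition pos :: "'a \<Rightarrow> nat" where "pos u = (LEAST i. vs ! i = u)"

lemma pos_nth:
  assumes "i < n" shows "pos (vs ! i) = i"
  unfolding pos_def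
proof (rule Least_equality)
  fix j assume "vs ! j = vs ! i"
  with assms show "i \<le> j" using distinct_vs by (cases "j < n") (auto simp: nth_eq_iff_index_eq)
qed simp

lemma pos_less: "u \<in> V \<Longrightarrow> pos u < n" and nth_pos: "u \<in> V \<Longrightarrow> vs ! pos u = u"
  using set_vs pos_nth by (auto simp: in_set_conv_nth)

lemma pos_less_if_before: "before vs s u \<Longrightarrow> pos s < pos u"
  unfolding before_def using pos_nth by auto

definition sol :: "nat \<Rightarrow> 'a set" where
  "sol t = foldl (pg_step vs E f \<beta>) {} (take t vs)"

lemma sol_Suc: "t < n \<Longrightarrow> sol (Suc t) = pg_step vs E f \<beta> (sol t) (vs ! t)"
  by (simp add: sol_def take_Suc_conv_app_nth)

lemma sol_Suc_subset: "t < n \<Longrightarrow> sol (Suc t) \<subseteq> insert (vs ! t) (sol t)"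
  using sol_Suc pg_step_subset by simp

lemma sol_length: "sol n = preemptive_greedy vs E f \<beta>"
  by (simp add: sol_def preemptive_greedy_def)

lemma sol_subset_take: "sol t \<subseteq> set (take t vs)"
  using foldl_pg_step_subset[of vs E f \<beta> "{}" "take t vs"] by (simp add: sol_def)

lemma sol_subset: "sol t \<subseteq> V"
  using sol_subset_take[of t] set_take_subset[of t vs] set_vs by blast

lemma finite_sol: "finite (sol t)"
  using finite_subset[OF sol_subset] set_vs by auto

lemma pos_less_if_in_sol:
  assumes "u \<in> sol t" shows "pos u < t"
proof -
  have "u \<in> set (take t vs)" using sol_subset_take assms ..
  then obtain i where "i < t" "i < n" "u = vs ! i" by (auto simp: in_set_conv_nth)
  then show ?thesis using pos_nth by simp
qed

lemma in_sol_if_in_later_sol: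
  assumes "s \<in> sol t'" "pos s < t" "t \<le> t'" "t' \<le> n"
  shows "s \<in> sol t"
  using assms
proof (induction t')
  case (Suc m)
  show ?case
  proof (cases "t = Suc m")
    case False
    have "m < n" using Suc.prems by simp
    have "vs ! m \<noteq> s" using pos_nth[OF \<open>m < n\<close>] Suc.prems False by auto
    then have "s \<in> sol m"
      using Suc.prems(1) sol_Suc_subset[OF \<open>m < n\<close>] by blast
    then show ?thesis using Suc False by simp
  qed (use Suc in simp)
qed simp

definition chosen :: "nat \<Rightarrow> 'a set" where
  "chosen m = (\<Union>t\<le>m. sol t)"

lemma sol_subset_chosen: "t \<le> m \<Longrightarrow> sol t \<subseteq> chosen m"
  unfolding chosen_def by blast

lemma chosen_subset: "chosen m \<subseteq> V"
  unfolding chosen_def using sol_subset by (intro UN_least)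

lemma finite_chosen: "finite (chosen m)"
  using finite_subset[OF chosen_subset] set_vs by auto

text \<open>While u is in the solution, the vertices preceding u can only leave it. Hence
  stable_preds u is the set of predecessors of u in the solution at the last step that
  contains u, and frozen_value u is the incremental value of u at that step.\<close>

definition stable_preds :: "'a \<Rightarrow> 'a set" where
  "stable_preds u = {s. before vs s u \<and> (\<forall>t\<le>n. u \<in> sol t \<longrightarrow> s \<in> sol t)}"

definition frozen_value :: "'a \<Rightarrow> real" where
  "frozen_value u = marginal f (stable_preds u) u"

lemma stable_preds_subset: "stable_preds u \<subseteq> V"
  using set_vs by (auto simp: stable_preds_def dest: before_in_set)

lemma frozen_value_nonneg: "u \<in> V \<Longrightarrow> 0 \<le> frozen_value u"
  unfolding frozen_value_def using stable_preds_subset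
  by (intro marginal_nonneg[OF submodular]) auto

lemma incr_value_le_frozen_value:
  assumes "u \<in> sol t" "t \<le> n" "sol t \<subseteq> X" "X \<subseteq> V"
  shows "incr_value vs f X u \<le> frozen_value u"
  unfolding incr_value_def frozen_value_def
proof (rule marginal_antimono[OF submodular])
  show "stable_preds u \<subseteq> {s \<in> X. before vs s u}"
    using assms unfolding stable_preds_def by blast
  show "{s \<in> X. before vs s u} \<union> {u} \<subseteq> V" using assms by blast
qed

lemma frozen_value_le_incr_value:
  assumes "u \<in> sol t" "t \<le> n"
    and last: "\<And>t'. t < t' \<Longrightarrow> t' \<le> n \<Longrightarrow> u \<notin> sol t'"
  shows "frozen_value u \<le> incr_value vs f (sol t) u"
  unfolding incr_value_def frozen_value_def
proof (rule marginal_antimono[OF submodular])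
  have "s \<in> stable_preds u" if "s \<in> sol t" "before vs s u" for s
  proof -
    have "s \<in> sol t'" if "t' \<le> n" "u \<in> sol t'" for t'
    proof -
      have "t' \<le> t" using last that by (meson not_le)
      moreover have "pos s < t'"
        using pos_less_if_before[OF \<open>before vs s u\<close>] pos_less_if_in_sol[OF \<open>u \<in> sol t'\<close>]
        by simp
      ultimately show ?thesis using in_sol_if_in_later_sol \<open>s \<in> sol t\<close> assms(2) by blast
    qed
    then show ?thesis unfolding stable_preds_def using \<open>before vs s u\<close> by blast
  qed
  then show "{s \<in> sol t. before vs s u} \<subseteq> stable_preds u" by blast
  show "stable_preds u \<union> {u} \<subseteq> V" using stable_preds_subset assms(1) sol_subset by blast
qed

lemma frozen_value_le_incr_value_if_evicted:
  assumes "m < n" "u \<in> sol m" "u \<notin> sol (Suc m)"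
  shows "frozen_value u \<le> incr_value vs f (sol m) u"
proof (rule frozen_value_le_incr_value)
  fix t' assume "m < t'" "t' \<le> n"
  then show "u \<notin> sol t'"
    using in_sol_if_in_later_sol[of u t' "Suc m"] pos_less_if_in_sol[OF assms(2)] assms(3) by auto
qed (use assms in auto)

lemma f_sol_Suc_ge:
  assumes "m < n"
  shows "f (sol m) + \<beta> * (\<Sum>u\<in>sol m - sol (Suc m). frozen_value u) \<le> f (sol (Suc m))"
proof (cases "sol (Suc m) = sol m")
  case False
  let ?v = "vs ! m" and ?C = "nbr E (vs ! m) \<inter> sol m"
  let ?\<nu> = "\<lambda>u. incr_value vs f (sol m) u"
  have accept: "(1 + \<beta>) * (\<Sum>u\<in>?C. ?\<nu> u) \<le> marginal f (sol m) ?v"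
    and sol_Suc_eq: "sol (Suc m) = (sol m - ?C) \<union> {?v}"
    using False sol_Suc[OF assms] by (auto simp: pg_step_def Let_def split: if_splits)
  have "?v \<notin> sol m" using pos_less_if_in_sol pos_nth[OF assms] by fastforce
  then have evicted: "sol m - sol (Suc m) = ?C" using sol_Suc_eq by auto
  have "f (sol m) + \<beta> * (\<Sum>u\<in>?C. frozen_value u) \<le> f (sol m) + \<beta> * (\<Sum>u\<in>?C. ?\<nu> u)"
    using frozen_value_le_incr_value_if_evicted[OF assms] evicted \<beta>_pos
    by (intro add_left_mono mult_left_mono sum_mono) auto
  also have "\<dots> \<le> f (sol m - ?C) + (1 + \<beta>) * (\<Sum>u\<in>?C. ?\<nu> u)"
    using diff_le_sum_incr_value[OF submodular f_empty distinct_vs set_vs, of ?C "sol m"]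
      sol_subset by (auto simp: algebra_simps)
  also have "\<dots> \<le> f (sol m - ?C) + marginal f (sol m - ?C) ?v"
    using accept marginal_antimono[OF submodular, of "sol m - ?C" "sol m" ?v]
      sol_subset nth_mem[OF assms] set_vs by auto
  also have "\<dots> = f (sol (Suc m))"
    unfolding sol_Suc_eq marginal_def by simp
  finally show ?thesis unfolding evicted .
qed simp

lemma chosen_minus_sol_le:
  "m \<le> n \<Longrightarrow> \<beta> * (\<Sum>u\<in>chosen m - sol m. frozen_value u) \<le> f (sol m)"
proof (induction m)
  case 0
  then show ?case by (simp add: chosen_def sol_def f_empty)
next
  case (Suc m)
  then have "m < n" by simp
  have "vs ! m \<notin> chosen m"
    using pos_less_if_in_sol pos_nth[OF \<open>m < n\<close>] by (fastforce simp: chosen_def)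
  then have split: "chosen (Suc m) - sol (Suc m) = (chosen m - sol m) \<union> (sol m - sol (Suc m))"
    using sol_Suc_subset[OF \<open>m < n\<close>] sol_subset_chosen[of m m]
    by (auto simp: chosen_def le_Suc_eq)
  have "(\<Sum>u\<in>chosen (Suc m) - sol (Suc m). frozen_value u)
      = (\<Sum>u\<in>chosen m - sol m. frozen_value u) + (\<Sum>u\<in>sol m - sol (Suc m). frozen_value u)"
    unfolding split using finite_chosen finite_sol by (intro sum.union_disjoint) auto
  then show ?case
    using Suc f_sol_Suc_ge[OF \<open>m < n\<close>] by (simp add: distrib_left)
qed

lemma sum_frozen_value_chosen_le: "(\<Sum>u\<in>chosen n. frozen_value u) \<le> (1 + 1 / \<beta>) * f (sol n)"
proof -
  have "(\<Sum>u\<in>sol n. frozen_value u) \<le> (\<Sum>u\<in>sol n. incr_value vs f (sol n) u)"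
    by (intro sum_mono frozen_value_le_incr_value) auto
  also have "\<dots> = f (sol n)"
    using sum_incr_value[OF distinct_vs, of "sol n" f] sol_subset set_vs f_empty by simp
  finally have "(\<Sum>u\<in>sol n. frozen_value u) \<le> f (sol n)" .
  moreover have "(\<Sum>u\<in>chosen n - sol n. frozen_value u) \<le> f (sol n) / \<beta>"
    using chosen_minus_sol_le[of n] \<beta>_pos by (simp add: field_simps)
  moreover have "(\<Sum>u\<in>chosen n. frozen_value u)
      = (\<Sum>u\<in>chosen n - sol n. frozen_value u) + (\<Sum>u\<in>sol n. frozen_value u)"
    using sum.subset_diff[OF sol_subset_chosen finite_chosen] by blast
  ultimately show ?thesis by (simp add: algebra_simps)
qed

lemma f_chosen_le: "f (chosen n) \<le> (\<Sum>u\<in>chosen n. frozen_value u)"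
proof -
  have "f (chosen n) = (\<Sum>u\<in>chosen n. incr_value vs f (chosen n) u)"
    using sum_incr_value[OF distinct_vs, of "chosen n" f] chosen_subset set_vs f_empty by simp
  also have "\<dots> \<le> (\<Sum>u\<in>chosen n. frozen_value u)"
  proof (rule sum_mono)
    fix u assume "u \<in> chosen n"
    then obtain t where "t \<le> n" "u \<in> sol t" unfolding chosen_def by blast
    then show "incr_value vs f (chosen n) u \<le> frozen_value u"
      using sol_subset_chosen chosen_subset by (intro incr_value_le_frozen_value) auto
  qed
  finally show ?thesis .
qed

lemma marginal_chosen_le_if_rejected:
  assumes "x \<in> V" "x \<notin> chosen n"
  shows "marginal f (chosen n) x \<le> (1 + \<beta>) * (\<Sum>u\<in>nbr E x \<inter> sol (pos x). frozen_value u)"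
proof -
  let ?i = "pos x" and ?C = "nbr E x \<inter> sol (pos x)"
  have i: "?i < n" "vs ! ?i = x" using pos_less nth_pos assms(1) by auto
  have "x \<notin> sol (Suc ?i)" using assms(2) sol_subset_chosen[of "Suc ?i" n] i(1) by auto
  then have "marginal f (sol ?i) x < (1 + \<beta>) * (\<Sum>u\<in>?C. incr_value vs f (sol ?i) u)"
    using sol_Suc[OF i(1)] i(2) by (auto simp: pg_step_def Let_def split: if_splits)
  moreover have "marginal f (chosen n) x \<le> marginal f (sol ?i) x"
    using sol_subset_chosen[of ?i n] i(1) chosen_subset assms(1)
    by (intro marginal_antimono[OF submodular]) auto
  moreover have "(1 + \<beta>) * (\<Sum>u\<in>?C. incr_value vs f (sol ?i) u)
      \<le> (1 + \<beta>) * (\<Sum>u\<in>?C. frozen_value u)"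
    using i(1) sol_subset \<beta>_pos
    by (intro mult_left_mono sum_mono incr_value_le_frozen_value) auto
  ultimately show ?thesis by linarith
qed

lemma card_charging_le:
  assumes ord: "k_independence_ordering k V E vs" and T: "independent_set V E T"
    and u: "u \<in> chosen n"
  shows "card {x \<in> T - chosen n. u \<in> nbr E x \<inter> sol (pos x)} \<le> k"
proof -
  let ?I = "{x \<in> T - chosen n. u \<in> nbr E x \<inter> sol (pos x)}"
  have uV: "u \<in> V" using u chosen_subset by blast
  have "?I \<subseteq> nbr E (vs ! pos u) \<inter> set (drop (pos u) vs)"
  proof
    fix x assume x: "x \<in> ?I"
    then have xV: "x \<in> V" and "E x u" "x \<noteq> u" and "pos u < pos x"
      using T u pos_less_if_in_sol by (auto simp: independent_set_def nbr_def)
    then have "E u x" using graph by (simp add: simple_graph_def)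
    moreover have "x \<in> set (drop (pos u) vs)"
      unfolding in_set_conv_nth using \<open>pos u < pos x\<close> pos_less[OF xV] nth_pos[OF xV]
      by (auto intro!: exI[of _ "pos x - pos u"])
    ultimately show "x \<in> nbr E (vs ! pos u) \<inter> set (drop (pos u) vs)"
      using nth_pos[OF uV] \<open>x \<noteq> u\<close> by (simp add: nbr_def)
  qed
  moreover have "independent E ?I" using T by (auto simp: independent_set_def independent_def)
  ultimately show ?thesis
    using ord pos_less[OF uV] unfolding k_independence_ordering_def by blast
qed

lemma sum_charging_le:
  assumes ord: "k_independence_ordering k V E vs" and T: "independent_set V E T"
  shows "(\<Sum>x\<in>T - chosen n. \<Sum>u\<in>nbr E x \<inter> sol (pos x). frozen_value u)
    \<le> real k * (\<Sum>u\<in>chosen n. frozen_value u)"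
proof -
  have TV: "T \<subseteq> V" using T by (simp add: independent_set_def)
  have "nbr E x \<inter> sol (pos x) = {u \<in> chosen n. u \<in> nbr E x \<inter> sol (pos x)}" if "x \<in> T" for x
  proof -
    have "sol (pos x) \<subseteq> chosen n"
      using sol_subset_chosen pos_less[of x] that TV by (meson less_imp_le subsetD)
    then show ?thesis by blast
  qed
  then have "(\<Sum>x\<in>T - chosen n. \<Sum>u\<in>nbr E x \<inter> sol (pos x). frozen_value u)
      = (\<Sum>x\<in>T - chosen n. \<Sum>u\<in>{u \<in> chosen n. u \<in> nbr E x \<inter> sol (pos x)}. frozen_value u)"
    by (intro sum.cong) auto
  also have "\<dots> \<le> real k * (\<Sum>u\<in>chosen n. frozen_value u)"
  proof (rule sum_sum_le_card_bound)
    show "finite (T - chosen n)" using TV set_vs finite_subset by auto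
    show "0 \<le> frozen_value u" if "u \<in> chosen n" for u
      using that chosen_subset frozen_value_nonneg by blast
  qed (use finite_chosen card_charging_le[OF ord T] in auto)
  finally show ?thesis .
qed

lemma approximation_guarantee:
  assumes ord: "k_independence_ordering k V E vs" and T: "independent_set V E T"
  shows "f T \<le> (real k * (1 + \<beta>) + 1) * (1 + 1 / \<beta>) * f (sol n)"
proof -
  let ?A = "chosen n" and ?\<Phi> = "\<Sum>u\<in>chosen n. frozen_value u"
  let ?charge = "\<lambda>x. \<Sum>u\<in>nbr E x \<inter> sol (pos x). frozen_value u"
  have TV: "T \<subseteq> V" using T by (simp add: independent_set_def)
  then have "finite (T - ?A)" using set_vs finite_subset by auto
  have "f T \<le> f (?A \<union> (T - ?A))"
    using TV chosen_subset by (intro monotone_submodular_mono[OF submodular]) auto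
  also have "\<dots> \<le> f ?A + (\<Sum>x\<in>T - ?A. marginal f ?A x)"
    using TV chosen_subset \<open>finite (T - ?A)\<close> by (intro le_sum_marginal[OF submodular]) auto
  also have "\<dots> \<le> f ?A + (\<Sum>x\<in>T - ?A. (1 + \<beta>) * ?charge x)"
    using TV by (intro add_left_mono sum_mono marginal_chosen_le_if_rejected) auto
  also have "\<dots> = f ?A + (1 + \<beta>) * (\<Sum>x\<in>T - ?A. ?charge x)"
    by (simp add: sum_distrib_left)
  also have "\<dots> \<le> ?\<Phi> + (1 + \<beta>) * (real k * ?\<Phi>)"
    using f_chosen_le sum_charging_le[OF ord T] \<beta>_pos by (intro add_mono mult_left_mono) auto
  also have "\<dots> = (real k * (1 + \<beta>) + 1) * ?\<Phi>" by (simp add: algebra_simps)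
  also have "\<dots> \<le> (real k * (1 + \<beta>) + 1) * ((1 + 1 / \<beta>) * f (sol n))"
    using sum_frozen_value_chosen_le \<beta>_pos by (intro mult_left_mono) auto
  finally show ?thesis by (simp add: mult.assoc)
qed

end

theorem theorem6:
  fixes V :: "'a set" and E :: "'a \<Rightarrow> 'a \<Rightarrow> bool" and vs :: "'a list"
    and f :: "'a set \<Rightarrow> real" and k :: nat and \<beta> :: real
  assumes "k \<ge> 1"
    and "simple_graph V E"
    and "k_independence_ordering k V E vs"
    and "monotone_submodular V f"
    and "f {} = 0"
    and "\<beta> > 0"
  shows "independent_set V E (preemptive_greedy vs E f \<beta>) \<and>
         (\<forall>T. independent_set V E T \<longrightarrow>
            f T \<le> (real k * (1 + \<beta>) + 1) * (1 + 1 / \<beta>) * f (preemptive_greedy vs E f \<beta>))"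
proof -
  interpret preemptive_greedy_analysis V E vs f \<beta>
    using assms by unfold_locales (auto simp: k_independence_ordering_def)
  show ?thesis
    using independent_set_preemptive_greedy[OF assms(2) set_vs]
      approximation_guarantee[OF assms(3)]
    by (simp add: sol_length)
qed

end
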